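(* Let $A\in\mathbb{R}^{d\times d}$, $B\in\mathbb{R}^{d\times n}$, $C\in\mathbb{R}^{n\times d}$, $D\in\mathbb{R}^{n\times n}$ with every eigenvalue of $A$ in the closed left half-plane, and let $H(\xi)=D+C(\xi I-A)^{-1}B$. Let $X\in\mathbb{R}^{d\times d}$ be symmetric and let $L,W$ be real matrices (with the same number of rows) satisfying $-A^TX-XA=L^TL$, $C-B^TX=W^TL$ and $D+D^T=W^TW$. Let $$Z(\xi)=W+L(\xi I-A)^{-1}B,\qquad Y(\xi)=\begin{bmatrix}\xi I-A & -B\\ L & W\end{bmatrix}.$$ Then $Z^\star Z=H+H^\star$, and $Z$ is a spectral factor of $H+H^\star$ if and only if $Y(\lambda)$ has full row rank for all $\lambda\in\mathbb{C}$ with $\mathrm{Re}(\lambda)>0$.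
   Context: For a real rational matrix $G$, $G^\star(\xi):=G(-\xi)^T$. If $Z\in\mathbb{R}^{r\times n}(\xi)$ and $F=Z^\star Z$, $Z$ is called a spectral factor of $F$ if $Z$ is analytic in the open right half-plane and $Z(\lambda)$ has full row rank for every $\lambda$ in the open right half-plane. *)

theory Defs
  imports "HOL-Analysis.Analysis"
begin

definition cmat :: "real^'n^'m \<Rightarrow> complex^'n^'m" where
  "cmat M = (\<chi> i j. complex_of_real (M $ i $ j))"

definition is_ceigenvalue :: "real^'n^'n \<Rightarrow> complex \<Rightarrow> bool" where
  "is_ceigenvalue A s \<longleftrightarrow> (\<exists>v. v \<noteq> 0 \<and> cmat A *v v = s *s v)"

text \<open>The rational matrix D + C (xi I - A)^-1 B, as a function on complex numbers
  (junk values at the finitely many eigenvalues of A).\<close>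
definition ratmat :: "real^'d^'d \<Rightarrow> real^'n^'d \<Rightarrow> real^'d^'r \<Rightarrow> real^'n^'r
    \<Rightarrow> complex \<Rightarrow> complex^'n^'r" where
  "ratmat A B C D \<xi> = cmat D + cmat C ** matrix_inv (mat \<xi> - cmat A) ** cmat B"

definition para_adj :: "(complex \<Rightarrow> complex^'n^'m) \<Rightarrow> complex \<Rightarrow> complex^'m^'n" where
  "para_adj G \<xi> = transpose (G (- \<xi>))"

text \<open>Equality of rational matrices: the representing functions agree up to finitely
  many points (poles).\<close>
definition rat_eq :: "(complex \<Rightarrow> complex^'n^'m) \<Rightarrow> (complex \<Rightarrow> complex^'n^'m) \<Rightarrow> bool" where
  "rat_eq F G \<longleftrightarrow> finite {\<xi>. F \<xi> \<noteq> G \<xi>}"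

definition RHP :: "complex set" where
  "RHP = {s. Re s > 0}"

definition spectral_factor :: "(complex \<Rightarrow> complex^'n^'r) \<Rightarrow> (complex \<Rightarrow> complex^'n^'n) \<Rightarrow> bool" where
  "spectral_factor Z F \<longleftrightarrow>
     rat_eq (\<lambda>\<xi>. para_adj Z \<xi> ** Z \<xi>) F \<and>
     (\<forall>i j. (\<lambda>\<xi>. Z \<xi> $ i $ j) analytic_on RHP) \<and>
     (\<forall>s\<in>RHP. rank (Z s) = CARD('r))"

text \<open>The block matrix Y(xi) = [xi I - A, -B; L, W].\<close>
definition Ymat :: "real^'d^'d \<Rightarrow> real^'n^'d \<Rightarrow> real^'d^'r \<Rightarrow> real^'n^'r
    \<Rightarrow> complex \<Rightarrow> complex^('d + 'n)^('d + 'r)" where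
  "Ymat A B L W \<xi> = (\<chi> i j. case i of
       Inl a \<Rightarrow> (case j of Inl b \<Rightarrow> (mat \<xi> - cmat A) $ a $ b | Inr c \<Rightarrow> - (cmat B $ a $ c))
     | Inr p \<Rightarrow> (case j of Inl b \<Rightarrow> cmat L $ p $ b | Inr c \<Rightarrow> cmat W $ p $ c))"

end

theory Submission
  imports Defs "HOL-Computational_Algebra.Polynomial"
begin

text \<open>Write \<open>R(\<xi>) = (\<xi>I - A)\<inverse>\<close>. Shifting the Lyapunov equation by \<open>\<plusminus>\<xi>\<close> gives
  \<open>L\<^sup>TL = (-\<xi>I - A\<^sup>T)X + X(\<xi>I - A)\<close>, hence \<open>R(-\<xi>)\<^sup>T L\<^sup>TL R(\<xi>) = X R(\<xi>) + R(-\<xi>)\<^sup>T X\<close>;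
  together with \<open>W\<^sup>TL = C - B\<^sup>TX\<close> and \<open>W\<^sup>TW = D + D\<^sup>T\<close> this expands \<open>Z\<^sup>\<star>Z\<close> into \<open>H + H\<^sup>\<star>\<close>
  whenever \<open>\<xi>\<close> and \<open>-\<xi>\<close> avoid the finitely many eigenvalues of \<open>A\<close>.

  By stability \<open>\<lambda>I - A\<close> is invertible in the open right half-plane, so there \<open>Z\<close> is analytic
  (Cramer's rule) and \<open>Z(\<lambda>)\<close> is the Schur complement of \<open>\<lambda>I - A\<close> in \<open>Y(\<lambda>)\<close>: a left null
  vector \<open>(u, w)\<close> of \<open>Y(\<lambda>)\<close> has \<open>u = -w L R(\<lambda>)\<close>, and then \<open>w\<close> is a left null vector of
  \<open>Z(\<lambda>)\<close>.\<close>

lemma matrix_add_rdistrib: "((A::'a::semiring_1^'n^'m) + B) ** C = A ** C + B ** C"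
  by (simp add: matrix_matrix_mult_def vec_eq_iff distrib_right sum.distrib)

lemma matrix_diff_ldistrib: "(A::'a::ring_1^'n^'m) ** (B - C) = A ** B - A ** C"
  by (simp add: matrix_matrix_mult_def vec_eq_iff right_diff_distrib sum_subtractf)

lemma matrix_diff_rdistrib: "((A::'a::ring_1^'n^'m) - B) ** C = A ** C - B ** C"
  by (simp add: matrix_matrix_mult_def vec_eq_iff left_diff_distrib sum_subtractf)

lemma matrix_neg_mult: "(- (A::'a::ring_1^'n^'m)) ** B = - (A ** B)"
  by (simp add: matrix_matrix_mult_def vec_eq_iff sum_negf)

lemma matrix_mult_neg: "(A::'a::ring_1^'n^'m) ** (- B) = - (A ** B)"
  by (simp add: matrix_matrix_mult_def vec_eq_iff sum_negf)

lemmas matrix_ring_simps =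
  matrix_add_ldistrib matrix_add_rdistrib matrix_diff_ldistrib matrix_diff_rdistrib
  matrix_neg_mult matrix_mult_neg matrix_mul_assoc

lemma transpose_add: "transpose (A + B) = transpose A + transpose (B::'a::semiring_1^'n^'m)"
  by (simp add: transpose_def vec_eq_iff)

lemma transpose_diff: "transpose (A - B) = transpose A - transpose (B::'a::ring_1^'n^'m)"
  by (simp add: transpose_def vec_eq_iff)

lemma mat_uminus: "mat (- c) = - mat (c::'a::ring_1)"
  by (simp add: mat_def vec_eq_iff)

lemma mat_mult_commute: "mat c ** X = X ** mat (c::'a::comm_semiring_1)"
  by (simp add: vec_eq_iff matrix_matrix_mult_def mat_def if_distrib if_distribR mult.commute
      cong: if_cong)

lemma matrix_vector_mult_mat: "mat c *v x = c *s (x::'a::semiring_1^'n)"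
  by (simp add: vec_eq_iff matrix_vector_mult_def mat_def if_distrib if_distribR cong: if_cong)

lemma vector_matrix_mult_uminus: "(- x) v* (A::'a::ring_1^'n^'m) = - (x v* A)"
  by (simp add: vec_eq_iff vector_matrix_mult_def sum_negf)

lemma row_eq_axis_vector_matrix_mult: "row i M = axis i (1::'a::comm_semiring_1) v* M"
  by (simp add: vec_eq_iff vector_matrix_mult_def axis_def row_def if_distrib if_distribR
      cong: if_cong)

lemma cmat_mult: "cmat (X ** Y) = cmat X ** cmat Y"
  by (simp add: cmat_def matrix_matrix_mult_def vec_eq_iff)

lemma cmat_transpose: "cmat (transpose X) = transpose (cmat X)"
  by (simp add: cmat_def transpose_def vec_eq_iff)

lemma cmat_add: "cmat (X + Y) = cmat X + cmat Y"
  by (simp add: cmat_def vec_eq_iff)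

lemma cmat_diff: "cmat (X - Y) = cmat X - cmat Y"
  by (simp add: cmat_def vec_eq_iff)

lemma cmat_uminus: "cmat (- X) = - cmat X"
  by (simp add: cmat_def vec_eq_iff)

lemmas cmat_hom = cmat_mult cmat_transpose cmat_add cmat_diff cmat_uminus

lemma rank_eq_nrows_iff_left_kernel:
  fixes M :: "'a::field^'n^'m"
  shows "rank M = CARD('m) \<longleftrightarrow> (\<forall>y. y v* M = 0 \<longrightarrow> y = 0)"
proof -
  let ?f = "\<lambda>y. y v* M"
  have "?f = (*v) (transpose M)"
    by (simp add: fun_eq_iff)
  then have lin: "Vector_Spaces.linear (*s) (*s) ?f"
    using matrix_vector_mul_linear_gen[of "transpose M"] by simp
  have rows: "rows M = ?f ` cart_basis"
    by (auto simp: rows_def cart_basis_def row_eq_axis_vector_matrix_mult)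
  have "rank M = CARD('m) \<longleftrightarrow> inj ?f"
  proof
    assume "inj ?f"
    then show "rank M = CARD('m)"
      unfolding row_rank_def_gen rows
      using vec.dim_image_eq[OF lin, of cart_basis]
      by (simp add: vec.dim_eq_card_independent independent_cart_basis card_cart_basis)
  next
    assume rk: "rank M = CARD('m)"
    have "card (?f ` cart_basis) \<le> CARD('m)"
      by (metis card_cart_basis card_image_le finite_cart_basis)
    then have ind: "vec.independent (?f ` cart_basis)"
      using rk unfolding row_rank_def_gen rows
      by (intro vec.card_le_dim_spanning[OF order_refl vec.span_superset])
        (auto simp: finite_cart_basis)
    then have "card (?f ` cart_basis) = CARD('m)"
      using rk unfolding row_rank_def_gen rows by (simp add: vec.dim_eq_card_independent)
    then have "inj_on ?f cart_basis"
      by (simp add: inj_on_iff_eq_card finite_cart_basis card_cart_basis)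
    then show "inj ?f"
      using vec.linear_inj_on_span_iff_independent_image[OF lin ind] span_cart_basis by simp
  qed
  also have "\<dots> \<longleftrightarrow> (\<forall>y. ?f y = 0 \<longrightarrow> y = 0)"
    using vec.linear_inj_iff_eq_0[OF lin] by blast
  finally show ?thesis .
qed

lemma matrix_inv_det_nonzero:
  fixes K :: "'a::field^'n^'n"
  assumes "det K \<noteq> 0"
  shows "K ** matrix_inv K = mat 1" and "matrix_inv K ** K = mat 1"
proof -
  have "\<exists>K'. K ** K' = mat 1 \<and> K' ** K = mat 1"
    using assms invertible_det_nz unfolding invertible_def by blast
  then have "K ** matrix_inv K = mat 1 \<and> matrix_inv K ** K = mat 1"
    unfolding matrix_inv_def by (rule someI_ex)
  then show "K ** matrix_inv K = mat 1" and "matrix_inv K ** K = mat 1"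
    by auto
qed

lemma matrix_inv_entry_cramer:
  fixes K :: "'a::field^'n^'n"
  assumes "det K \<noteq> 0"
  shows "matrix_inv K $ l $ k =
    det ((\<chi> i j. if j = l then axis k 1 $ i else K $ i $ j)::'a^'n^'n) / det K"
proof -
  have "K *v (matrix_inv K *v axis k 1) = axis k 1"
    by (simp add: matrix_vector_mul_assoc matrix_inv_det_nonzero[OF assms])
  then have "matrix_inv K *v axis k 1 =
      (\<chi> l. det ((\<chi> i j. if j = l then axis k 1 $ i else K $ i $ j)::'a^'n^'n) / det K)"
    using cramer[OF assms] by blast
  moreover have "(matrix_inv K *v axis k 1) $ l = matrix_inv K $ l $ k"
    by (simp add: matrix_vector_mult_def axis_def if_distrib if_distribR cong: if_cong)
  ultimately show ?thesis
    by simp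
qed

lemma det_polynomial_entries:
  fixes p :: "'n::finite \<Rightarrow> 'n \<Rightarrow> 'a::comm_ring_1 poly"
  obtains P where "\<And>x. det ((\<chi> i j. poly (p i j) x)::'a^'n^'n) = poly P x"
proof -
  let ?P = "\<Sum>q\<in>{q. q permutes (UNIV::'n set)}. [:of_int (sign q):] * (\<Prod>i\<in>UNIV. p i (q i))"
  have "det ((\<chi> i j. poly (p i j) x)::'a^'n^'n) = poly ?P x" for x
    by (simp add: det_def poly_sum poly_prod)
  then show thesis
    by (rule that)
qed

lemma finite_singular_char_matrix:
  fixes M :: "'a::idom^'n^'n"
  assumes "det (mat s\<^sub>0 - M) \<noteq> 0"
  shows "finite {s. det (mat s - M) = 0}"
proof -
  define p where "p i j = [:- M $ i $ j, if i = j then 1 else 0:]" for i j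
  have char: "mat s - M = (\<chi> i j. poly (p i j) s)" for s
    by (simp add: vec_eq_iff p_def mat_def)
  obtain P where P: "\<And>s. det ((\<chi> i j. poly (p i j) s)::'a^'n^'n) = poly P s"
    using det_polynomial_entries[of p] by blast
  have "poly P s\<^sub>0 \<noteq> 0"
    using assms unfolding char P .
  then have "P \<noteq> 0"
    by auto
  then have "finite {s. poly P s = 0}"
    by (rule poly_roots_finite)
  then show ?thesis
    by (simp add: char P)
qed

lemma is_ceigenvalue_if_singular:
  assumes "det (mat s - cmat A) = 0"
  shows "is_ceigenvalue A s"
proof -
  obtain v where "v \<noteq> 0" and "(mat s - cmat A) *v v = 0"
    using assms invertible_det_nz[of "mat s - cmat A"] invertible_left_inverse[of "mat s - cmat A"]
      matrix_left_invertible_ker[of "mat s - cmat A"]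
    by blast
  then show ?thesis
    unfolding is_ceigenvalue_def by (auto simp: matrix_vector_mult_diff_rdistrib matrix_vector_mult_mat)
qed

lemma det_char_matrix_nonzero_if_stable:
  assumes stab: "\<And>s. is_ceigenvalue A s \<Longrightarrow> Re s \<le> 0" and "Re s > 0"
  shows "det (mat s - cmat A) \<noteq> 0"
  using assms is_ceigenvalue_if_singular by force

lemma det_holomorphic_on:
  fixes F :: "complex \<Rightarrow> complex^'n^'n"
  assumes "\<And>i j. (\<lambda>x. F x $ i $ j) holomorphic_on S"
  shows "(\<lambda>x. det (F x)) holomorphic_on S"
  unfolding det_def by (intro holomorphic_intros assms)

lemma resolvent_holomorphic_on:
  fixes M :: "complex^'n^'n"
  assumes nonsing: "\<And>s. s \<in> S \<Longrightarrow> det (mat s - M) \<noteq> 0"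
  shows "(\<lambda>s. matrix_inv (mat s - M) $ l $ k) holomorphic_on S"
proof -
  have entries: "(\<lambda>s. (if i = j then s else 0) - c) holomorphic_on S" for i j :: 'n and c
    by (cases "i = j") (auto intro: holomorphic_intros)
  let ?N = "\<lambda>s. (\<chi> i j. if j = l then axis k 1 $ i else (mat s - M) $ i $ j)::complex^'n^'n"
  have "(\<lambda>s. det (?N s)) holomorphic_on S"
  proof (rule det_holomorphic_on)
    show "(\<lambda>s. ?N s $ i $ j) holomorphic_on S" for i j
      by (cases "j = l") (simp_all add: mat_def entries)
  qed
  moreover have "(\<lambda>s. det (mat s - M)) holomorphic_on S"
    by (rule det_holomorphic_on) (simp add: mat_def entries)
  ultimately have "(\<lambda>s. det (?N s) / det (mat s - M)) holomorphic_on S"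
    using nonsing by (intro holomorphic_intros)
  then show ?thesis
    by (rule holomorphic_transform) (simp add: matrix_inv_entry_cramer nonsing)
qed

lemma ratmat_analytic_on_RHP:
  assumes stab: "\<And>s. is_ceigenvalue A s \<Longrightarrow> Re s \<le> 0"
  shows "(\<lambda>s. ratmat A B C D s $ i $ j) analytic_on RHP"
proof -
  have "open RHP"
    by (simp add: RHP_def open_halfspace_Re_gt)
  have nonsing: "\<And>s. s \<in> RHP \<Longrightarrow> det (mat s - cmat A) \<noteq> 0"
    using det_char_matrix_nonzero_if_stable[OF stab] by (simp add: RHP_def)
  show ?thesis
    unfolding analytic_on_open[OF \<open>open RHP\<close>] ratmat_def
    by (simp add: matrix_matrix_mult_def)
      (intro holomorphic_intros resolvent_holomorphic_on[OF nonsing])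
qed

lemma para_hermitian_factorization_identity:
  fixes A X R S :: "'a::comm_ring_1^'d^'d" and B :: "'a^'n^'d" and C :: "'a^'d^'n"
    and D :: "'a^'n^'n" and L :: "'a^'d^'r" and W :: "'a^'n^'r"
  assumes R: "(mat \<xi> - A) ** R = mat 1"
    and S: "(mat (- \<xi>) - A) ** S = mat 1"
    and symX: "transpose X = X"
    and eq1: "- (transpose A ** X) - X ** A = transpose L ** L"
    and eq2: "C - transpose B ** X = transpose W ** L"
    and eq3: "D + transpose D = transpose W ** W"
  shows "(transpose W + transpose B ** transpose S ** transpose L) ** (W + L ** R ** B)
       = D + C ** R ** B + (transpose D + transpose B ** transpose S ** transpose C)"
proof -
  let ?S = "transpose S" and ?A = "transpose A" and ?B = "transpose B"
  have S': "?S ** (mat (- \<xi>) - ?A) = mat 1"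
    using arg_cong[OF S, of transpose] by (simp add: matrix_transpose_mul transpose_diff)
  have "(mat (- \<xi>) - ?A) ** X + X ** (mat \<xi> - A) = - (?A ** X) - X ** A"
    by (simp add: matrix_ring_simps mat_uminus mat_mult_commute algebra_simps)
  then have LL: "transpose L ** L = (mat (- \<xi>) - ?A) ** X + X ** (mat \<xi> - A)"
    using eq1 by simp
  have "?S ** (transpose L ** L) ** R
      = (?S ** (mat (- \<xi>) - ?A)) ** X ** R + ?S ** X ** ((mat \<xi> - A) ** R)"
    unfolding LL by (simp add: matrix_ring_simps)
  then have SLLR: "?S ** (transpose L ** L) ** R = X ** R + ?S ** X"
    by (simp add: S' R)
  have LW: "transpose L ** W = transpose C - X ** B"
    using arg_cong[OF eq2, of transpose] symX by (simp add: matrix_transpose_mul transpose_diff)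
  have "(transpose W + ?B ** ?S ** transpose L) ** (W + L ** R ** B)
     = transpose W ** W + (transpose W ** L) ** R ** B + ?B ** ?S ** (transpose L ** W)
       + ?B ** (?S ** (transpose L ** L) ** R) ** B"
    by (simp add: matrix_ring_simps algebra_simps)
  also have "\<dots> = D + transpose D + (C - ?B ** X) ** R ** B + ?B ** ?S ** (transpose C - X ** B)
       + ?B ** (X ** R + ?S ** X) ** B"
    by (simp only: SLLR LW eq2 eq3)
  also have "\<dots> = D + C ** R ** B + (transpose D + ?B ** ?S ** transpose C)"
    by (simp add: matrix_ring_simps algebra_simps)
  finally show ?thesis .
qed

lemma ratmat_para_product:
  assumes nonsing: "det (mat \<xi> - cmat A) \<noteq> 0" "det (mat (- \<xi>) - cmat A) \<noteq> 0"
    and symX: "transpose X = X"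
    and eq1: "- (transpose A ** X) - X ** A = transpose L ** L"
    and eq2: "C - transpose B ** X = transpose W ** L"
    and eq3: "D + transpose D = transpose W ** W"
  shows "para_adj (ratmat A B L W) \<xi> ** ratmat A B L W \<xi>
       = ratmat A B C D \<xi> + para_adj (ratmat A B C D) \<xi>"
proof -
  have "transpose (cmat X) = cmat X"
    using symX by (simp flip: cmat_transpose)
  moreover have "- (transpose (cmat A) ** cmat X) - cmat X ** cmat A = transpose (cmat L) ** cmat L"
    using arg_cong[OF eq1, of cmat] by (simp add: cmat_hom)
  moreover have "cmat C - transpose (cmat B) ** cmat X = transpose (cmat W) ** cmat L"
    using arg_cong[OF eq2, of cmat] by (simp add: cmat_hom)
  moreover have "cmat D + transpose (cmat D) = transpose (cmat W) ** cmat W"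
    using arg_cong[OF eq3, of cmat] by (simp add: cmat_hom)
  ultimately show ?thesis
    using para_hermitian_factorization_identity[OF matrix_inv_det_nonzero(1)[OF nonsing(1)]
        matrix_inv_det_nonzero(1)[OF nonsing(2)]]
    by (simp add: para_adj_def ratmat_def transpose_add matrix_transpose_mul matrix_mul_assoc)
qed

lemma rat_eq_para_product:
  assumes stab: "\<And>s. is_ceigenvalue A s \<Longrightarrow> Re s \<le> 0"
    and symX: "transpose X = X"
    and eq1: "- (transpose A ** X) - X ** A = transpose L ** L"
    and eq2: "C - transpose B ** X = transpose W ** L"
    and eq3: "D + transpose D = transpose W ** W"
  shows "rat_eq (\<lambda>\<xi>. para_adj (ratmat A B L W) \<xi> ** ratmat A B L W \<xi>)
                (\<lambda>\<xi>. ratmat A B C D \<xi> + para_adj (ratmat A B C D) \<xi>)"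
proof -
  define E where "E = {s. det (mat s - cmat A) = 0}"
  have "det (mat 1 - cmat A) \<noteq> 0"
    using det_char_matrix_nonzero_if_stable[OF stab, where s = 1] by simp
  then have "finite E"
    unfolding E_def by (rule finite_singular_char_matrix)
  moreover have "{\<xi>. para_adj (ratmat A B L W) \<xi> ** ratmat A B L W \<xi>
                    \<noteq> ratmat A B C D \<xi> + para_adj (ratmat A B C D) \<xi>} \<subseteq> E \<union> uminus ` E"
    using ratmat_para_product[OF _ _ symX eq1 eq2 eq3] by (force simp: E_def)
  ultimately show ?thesis
    unfolding rat_eq_def by (simp add: finite_subset)
qed

lemma left_kernel_Schur_complement:
  fixes M R :: "'a::field^'d^'d" and B :: "'a^'n^'d" and L :: "'a^'d^'r" and W :: "'a^'n^'r"
  assumes MR: "M ** R = mat 1" and RM: "R ** M = mat 1"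
  shows "(\<forall>w. w v* (W + L ** R ** B) = 0 \<longrightarrow> w = 0) \<longleftrightarrow>
         (\<forall>u w. u v* M + w v* L = 0 \<longrightarrow> w v* W - u v* B = 0 \<longrightarrow> u = 0 \<and> w = 0)"
    (is "?schur \<longleftrightarrow> ?block")
proof -
  have first_block: "u v* M + w v* L = 0 \<longleftrightarrow> u = - (w v* (L ** R))" for u w
  proof
    assume "u v* M + w v* L = 0"
    then have "u v* M = - (w v* L)"
      by (simp add: eq_neg_iff_add_eq_0)
    then have "u = - (w v* L) v* R"
      by (metis MR vector_matrix_mul_assoc vector_matrix_mul_rid)
    then show "u = - (w v* (L ** R))"
      by (simp add: vector_matrix_mult_uminus vector_matrix_mul_assoc)
  next
    assume "u = - (w v* (L ** R))"
    then show "u v* M + w v* L = 0"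
      by (simp add: vector_matrix_mult_uminus vector_matrix_mul_assoc RM
          flip: matrix_mul_assoc)
  qed
  have second_block: "w v* W - (- (w v* (L ** R))) v* B = w v* (W + L ** R ** B)" for w
    by (simp add: vector_matrix_mult_add_rdistrib vector_matrix_mult_uminus
        vector_matrix_mul_assoc)
  show ?thesis
  proof
    assume ?schur
    show ?block
    proof (intro allI impI)
      fix u w
      assume "u v* M + w v* L = 0" and "w v* W - u v* B = 0"
      then have u: "u = - (w v* (L ** R))" and "w v* (W + L ** R ** B) = 0"
        using first_block second_block by metis+
      then have "w = 0"
        using \<open>?schur\<close> by blast
      then show "u = 0 \<and> w = 0"
        using u by simp
    qed
  next
    assume ?block
    show ?schur
      using \<open>?block\<close> first_block second_block by metis
  qed
qed

lemma sum_UNIV_Plus: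
  "(\<Sum>i\<in>UNIV. f i) = (\<Sum>a\<in>UNIV. f (Inl a)) + (\<Sum>b\<in>UNIV. f (Inr b))"
  for f :: "'a::finite + 'b::finite \<Rightarrow> 'c::comm_monoid_add"
  using sum.Plus[of "UNIV::'a set" "UNIV::'b set" f] by (simp add: comp_def)

lemma Ymat_left_kernel_iff:
  fixes A :: "real^'d^'d" and L :: "real^'d^'r"
  shows "y v* Ymat A B L W s = 0 \<longleftrightarrow>
     (\<chi> a. y $ Inl a) v* (mat s - cmat A) + (\<chi> p. y $ Inr p) v* cmat L = 0 \<and>
     (\<chi> p. y $ Inr p) v* cmat W - (\<chi> a. y $ Inl a) v* cmat B = 0"
proof -
  have "y v* Ymat A B L W s = 0 \<longleftrightarrow>
      (\<forall>b. (y v* Ymat A B L W s) $ Inl b = 0) \<and> (\<forall>c. (y v* Ymat A B L W s) $ Inr c = 0)"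
    by (metis sum.exhaust vec_eq_iff zero_index)
  then show ?thesis
    by (simp add: vec_eq_iff vector_matrix_mult_def Ymat_def sum_UNIV_Plus sum_negf)
qed

lemma Ymat_left_kernel_trivial_iff:
  fixes A :: "real^'d^'d" and L :: "real^'d^'r"
  shows "(\<forall>y. y v* Ymat A B L W s = 0 \<longrightarrow> y = 0) \<longleftrightarrow>
   (\<forall>u w. u v* (mat s - cmat A) + w v* cmat L = 0 \<longrightarrow> w v* cmat W - u v* cmat B = 0
      \<longrightarrow> u = 0 \<and> w = 0)"
    (is "?Y \<longleftrightarrow> ?blocks")
proof
  assume ?Y
  show ?blocks
  proof (intro allI impI)
    fix u :: "complex^'d" and w :: "complex^'r"
    assume "u v* (mat s - cmat A) + w v* cmat L = 0" and "w v* cmat W - u v* cmat B = 0"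
    moreover define y :: "complex^('d + 'r)"
      where "y = (\<chi> i. case i of Inl a \<Rightarrow> u $ a | Inr p \<Rightarrow> w $ p)"
    moreover have u: "(\<chi> a. y $ Inl a) = u" and w: "(\<chi> p. y $ Inr p) = w"
      by (simp_all add: y_def)
    ultimately have "y = 0"
      using \<open>?Y\<close> Ymat_left_kernel_iff by metis
    then show "u = 0 \<and> w = 0"
      using u w by (simp add: zero_vec_def)
  qed
next
  assume ?blocks
  show ?Y
  proof (intro allI impI)
    fix y
    assume "y v* Ymat A B L W s = 0"
    then have "(\<chi> a. y $ Inl a) = 0" and "(\<chi> p. y $ Inr p) = 0"
      using \<open>?blocks\<close> unfolding Ymat_left_kernel_iff by blast+
    then show "y = 0"
      by (simp add: vec_eq_iff) (metis sum.exhaust)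
  qed
qed

lemma full_row_rank_ratmat_iff_Ymat:
  fixes A :: "real^'d^'d" and B :: "real^'n^'d" and L :: "real^'d^'r" and W :: "real^'n^'r"
  assumes "det (mat s - cmat A) \<noteq> 0"
  shows "rank (ratmat A B L W s) = CARD('r) \<longleftrightarrow> rank (Ymat A B L W s) = CARD('d + 'r)"
proof -
  have "rank (ratmat A B L W s) = CARD('r) \<longleftrightarrow> (\<forall>w. w v* ratmat A B L W s = 0 \<longrightarrow> w = 0)"
    by (rule rank_eq_nrows_iff_left_kernel)
  also have "\<dots> \<longleftrightarrow> (\<forall>u w. u v* (mat s - cmat A) + w v* cmat L = 0 \<longrightarrow>
      w v* cmat W - u v* cmat B = 0 \<longrightarrow> u = 0 \<and> w = 0)"
    unfolding ratmat_def by (rule left_kernel_Schur_complement[OF matrix_inv_det_nonzero[OF assms]])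
  also have "\<dots> \<longleftrightarrow> (\<forall>y. y v* Ymat A B L W s = 0 \<longrightarrow> y = 0)"
    by (rule Ymat_left_kernel_trivial_iff[symmetric])
  also have "\<dots> \<longleftrightarrow> rank (Ymat A B L W s) = CARD('d + 'r)"
    by (rule rank_eq_nrows_iff_left_kernel[symmetric])
  finally show ?thesis .
qed

theorem lemmaD1:
  fixes A :: "real^'d^'d" and B :: "real^'n^'d" and C :: "real^'d^'n" and D :: "real^'n^'n"
    and X :: "real^'d^'d" and L :: "real^'d^'r" and W :: "real^'n^'r"
  assumes stab: "\<And>s. is_ceigenvalue A s \<Longrightarrow> Re s \<le> 0"
    and symX: "transpose X = X"
    and eq1: "- (transpose A ** X) - X ** A = transpose L ** L"
    and eq2: "C - transpose B ** X = transpose W ** L"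
    and eq3: "D + transpose D = transpose W ** W"
  shows "rat_eq (\<lambda>\<xi>. para_adj (ratmat A B L W) \<xi> ** ratmat A B L W \<xi>)
                (\<lambda>\<xi>. ratmat A B C D \<xi> + para_adj (ratmat A B C D) \<xi>)
       \<and> (spectral_factor (ratmat A B L W)
            (\<lambda>\<xi>. ratmat A B C D \<xi> + para_adj (ratmat A B C D) \<xi>)
          \<longleftrightarrow> (\<forall>s. Re s > 0 \<longrightarrow> rank (Ymat A B L W s) = CARD('d + 'r)))"
proof -
  have factorization: "rat_eq (\<lambda>\<xi>. para_adj (ratmat A B L W) \<xi> ** ratmat A B L W \<xi>)
      (\<lambda>\<xi>. ratmat A B C D \<xi> + para_adj (ratmat A B C D) \<xi>)"
    by (rule rat_eq_para_product[OF stab symX eq1 eq2 eq3])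
  have "rank (ratmat A B L W s) = CARD('r) \<longleftrightarrow> rank (Ymat A B L W s) = CARD('d + 'r)"
    if "Re s > 0" for s
    using full_row_rank_ratmat_iff_Ymat det_char_matrix_nonzero_if_stable[OF stab that] .
  then show ?thesis
    unfolding spectral_factor_def
    using factorization ratmat_analytic_on_RHP[OF stab] by (auto simp: RHP_def)
qed

end
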